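(* Let $n\ge 2$ and $1\le k\le n-1$ be integers, and let $z_1,\dots,z_n$ be indeterminates. Then \[ \Big(\prod_{i=0}^{k-1} i!\Big)^2\, n^{k-1}\,\Delta_{k+1}(H(n)) \;=\; \Delta_k(E(n)). \]
   Context: For $k\ge 0$ let $p_k=\sum_{i=1}^n z_i^k$ be the power sums. The Hermite matrix $H(n)$ is the matrix with entries $H(n)_{i,j}=p_{i+j-2}$ ($i,j\ge 1$). For an (infinite or finite) matrix $F$, $\Delta_k(F)$ denotes the determinant of its upper-left $k\times k$ submatrix. For distinct $i,j\in\{1,\dots,n\}$ and an integer $m\ge 0$, let $e^{(i,j)}_m$ be the elementary symmetric polynomial of degree $m$ in the $n-2$ variables $\{z_l: l\ne i,j\}$ (with $e^{(i,j)}_0=1$ and $e^{(i,j)}_m=0$ if $m>n-2$). $E(n)$ is the infinite matrix with entries, for $r,s\ge 1$, \[ E(n)_{r,s}=(r-1)!\,(s-1)!\sum_{1\le i<j\le n} e^{(i,j)}_{r-1}\,e^{(i,j)}_{s-1}\,(z_i-z_j)^2 . \] *)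

theory Defs
  imports "Jordan_Normal_Form.Determinant"
begin

text \<open>Polynomial identities in the indeterminates z_1..z_n are rendered as identities
holding for every assignment z :: nat => 'a in an arbitrary commutative ring
(only z 1, ..., z n are used).  Matrices are 1-indexed functions nat => nat => 'a.\<close>

definition power_sum :: "(nat \<Rightarrow> 'a::comm_ring_1) \<Rightarrow> nat \<Rightarrow> nat \<Rightarrow> 'a" where
  "power_sum z n k = (\<Sum>i\<in>{1..n}. z i ^ k)"

definition hermite_mat :: "(nat \<Rightarrow> 'a::comm_ring_1) \<Rightarrow> nat \<Rightarrow> nat \<Rightarrow> nat \<Rightarrow> 'a" where
  "hermite_mat z n i j = power_sum z n (i + j - 2)"

definition lead_minor :: "nat \<Rightarrow> (nat \<Rightarrow> nat \<Rightarrow> 'a::comm_ring_1) \<Rightarrow> 'a" where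
  "lead_minor k F = det (mat k k (\<lambda>(i, j). F (i + 1) (j + 1)))"

definition elem_sym :: "(nat \<Rightarrow> 'a::comm_ring_1) \<Rightarrow> nat set \<Rightarrow> nat \<Rightarrow> 'a" where
  "elem_sym z S m = (\<Sum>T\<in>{T. T \<subseteq> S \<and> card T = m}. \<Prod>l\<in>T. z l)"

definition e_ij :: "(nat \<Rightarrow> 'a::comm_ring_1) \<Rightarrow> nat \<Rightarrow> nat \<Rightarrow> nat \<Rightarrow> nat \<Rightarrow> 'a" where
  "e_ij z n i j m = elem_sym z ({1..n} - {i, j}) m"

definition E_mat :: "(nat \<Rightarrow> 'a::comm_ring_1) \<Rightarrow> nat \<Rightarrow> nat \<Rightarrow> nat \<Rightarrow> 'a" where
  "E_mat z n r s = of_nat (fact (r - 1) * fact (s - 1)) *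
     (\<Sum>(i, j)\<in>{(i, j). 1 \<le> i \<and> i < j \<and> j \<le> n}.
        e_ij z n i j (r - 1) * e_ij z n i j (s - 1) * (z i - z j)^2)"

end

theory Submission
  imports Defs "HOL-Computational_Algebra.Formal_Power_Series"
begin

text \<open>Pivoting on the entry p_0 = n (Chio condensation) turns n^(k-1) Delta_(k+1)(H(n)) into
det G, where G_ab = n p_(a+b+2) - p_(a+1) p_(b+1) for a, b < k.  By a Lagrange-type identity G is the
Gram matrix of the vectors (z_i^(a+1) - z_j^(a+1))_(i<j).  Comparing the generating functions
prod_l (1 + z_l t) with and without the factors for z_i and z_j writes r! (z_i - z_j) e_r^(i,j) as a
combination of these vectors with a lower triangular coefficient matrix C of diagonal r! (-1)^r.
So the leading k x k block of E(n) is C G C^T and Delta_k(E(n)) = (prod_(r<k) r!)^2 det G.\<close>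

lemma det_lower_triangular_prod:
  assumes "A \<in> carrier_mat n n" and "\<And>i j. i < j \<Longrightarrow> j < n \<Longrightarrow> A $$ (i, j) = 0"
  shows "det A = (\<Prod>i<n. A $$ (i, i))"
  using det_lower_triangular[OF assms(2,1)] assms(1) by (simp add: prod_list_diag_prod atLeast0LessThan)

definition pivot_condensation :: "'a::comm_ring_1 mat \<Rightarrow> 'a mat" where
  "pivot_condensation A = mat (dim_row A - 1) (dim_col A - 1)
     (\<lambda>(i, j). A $$ (0, 0) * A $$ (Suc i, Suc j) - A $$ (Suc i, 0) * A $$ (0, Suc j))"

lemma det_pivot_condensation_mult:
  fixes A :: "'a::comm_ring_1 mat"
  assumes A: "A \<in> carrier_mat (Suc k) (Suc k)"
  shows "A $$ (0, 0) ^ k * det A = A $$ (0, 0) * det (pivot_condensation A)"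
proof -
  let ?N = "A $$ (0, 0)"
  \<comment> \<open>\<open>L\<close> replaces row \<open>i > 0\<close> by \<open>?N \<cdot> row i - A(i,0) \<cdot> row 0\<close>.\<close>
  define L :: "'a mat" where "L = mat (Suc k) (Suc k) (\<lambda>(i, j).
    if i = 0 then (if j = 0 then 1 else 0)
    else (if j = 0 then - A $$ (i, 0) else 0) + (if j = i then ?N else 0))"
  have L: "L \<in> carrier_mat (Suc k) (Suc k)" by (simp add: L_def)
  have "det L = (\<Prod>i<Suc k. L $$ (i, i))"
    by (rule det_lower_triangular_prod[OF L]) (simp add: L_def)
  also have "\<dots> = ?N ^ k"
    by (simp add: L_def prod.lessThan_Suc_shift del: prod.lessThan_Suc)
  finally have det_L: "det L = ?N ^ k" .
  have "dim_row (L * A) = Suc k" "dim_col (L * A) = Suc k" using L A by auto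
  moreover have "(L * A) $$ (i, j)
      = (if i = 0 then A $$ (0, j) else ?N * A $$ (i, j) - A $$ (i, 0) * A $$ (0, j))"
    if "i < Suc k" "j < Suc k" for i j
    using that A
    by (auto simp: L_def index_mult_mat scalar_prod_def lessThan_atLeast0[symmetric] ring_distribs
        sum.distrib if_distrib[where f = "\<lambda>x. x * _"] sum.delta cong: if_cong)
  ultimately have "L * A = four_block_mat (mat 1 1 (\<lambda>_. ?N)) (mat 1 k (\<lambda>(_, j). A $$ (0, Suc j)))
      (0\<^sub>m k 1) (pivot_condensation A)"
    using A by (intro eq_matI) (auto simp: pivot_condensation_def less_Suc_eq_0_disj simp del: index_mult_mat)
  then have "det (L * A) = ?N * det (pivot_condensation A)"
    using A by (simp add: det_four_block_mat_lower_left_zero_col[where n = k] pivot_condensation_def det_single)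
  then show ?thesis using det_mult[OF L A] det_L by simp
qed

lemma det_pivot_condensation:
  fixes A :: "'a::comm_ring_1 mat"
  assumes A: "A \<in> carrier_mat (Suc k) (Suc k)" and "k \<noteq> 0"
  shows "A $$ (0, 0) ^ (k - 1) * det A = det (pivot_condensation A)"
proof -
  \<comment> \<open>The pivot may be a zero divisor, so cancel it where it is the indeterminate of \<open>'a poly\<close>
    and evaluate afterwards.\<close>
  define B :: "'a poly mat" where
    "B = mat (Suc k) (Suc k) (\<lambda>ij. if ij = (0, 0) then [:0, 1:] else [:A $$ ij:])"
  have B: "B \<in> carrier_mat (Suc k) (Suc k)" by (simp add: B_def)
  have "[:0, 1:] * ([:0, 1:] ^ (k - 1) * det B) = [:0, 1:] * det (pivot_condensation B)"
    using det_pivot_condensation_mult[OF B] \<open>k \<noteq> 0\<close>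
    by (simp add: B_def power_eq_if mult.assoc)
  then have B_eq: "[:0, 1:] ^ (k - 1) * det B = det (pivot_condensation B)"
    by (simp add: mult_pCons_left)
  interpret eval: comm_ring_hom "\<lambda>p. poly p (A $$ (0, 0))"
    by unfold_locales auto
  have "map_mat (\<lambda>p. poly p (A $$ (0, 0))) B = A"
    using A by (intro eq_matI) (auto simp: B_def)
  moreover have "map_mat (\<lambda>p. poly p (A $$ (0, 0))) (pivot_condensation B) = pivot_condensation A"
    using A by (intro eq_matI) (auto simp: B_def pivot_condensation_def)
  moreover have "poly ([:0, 1:] ^ (k - 1) * det B) (A $$ (0, 0)) = poly (det (pivot_condensation B)) (A $$ (0, 0))"
    using B_eq by (rule arg_cong)
  ultimately show ?thesis
    by (simp flip: eval.hom_det)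
qed

definition gram_mat :: "nat \<Rightarrow> 'x set \<Rightarrow> (nat \<Rightarrow> 'x \<Rightarrow> 'a::comm_ring_1) \<Rightarrow> 'a mat" where
  "gram_mat k X v = mat k k (\<lambda>(r, s). \<Sum>x\<in>X. v r x * v s x)"

lemma gram_mat_cong:
  "(\<And>r x. r < k \<Longrightarrow> x \<in> X \<Longrightarrow> v r x = w r x) \<Longrightarrow> gram_mat k X v = gram_mat k X w"
  unfolding gram_mat_def by (auto intro!: eq_matI sum.cong)

lemma gram_mat_lincomb:
  assumes C: "C \<in> carrier_mat k k"
  shows "gram_mat k X (\<lambda>r x. \<Sum>m<k. C $$ (r, m) * v m x) = C * gram_mat k X v * C\<^sup>T"
proof (rule eq_matI)
  fix r s
  assume "r < dim_row (C * gram_mat k X v * C\<^sup>T)" and "s < dim_col (C * gram_mat k X v * C\<^sup>T)"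
  then have r: "r < k" and s: "s < k"
    using C by (auto simp: gram_mat_def)
  have "(\<Sum>x\<in>X. (\<Sum>m<k. C $$ (r, m) * v m x) * (\<Sum>l<k. C $$ (s, l) * v l x))
      = (\<Sum>x\<in>X. \<Sum>m<k. \<Sum>l<k. C $$ (r, m) * C $$ (s, l) * (v m x * v l x))"
    by (simp add: sum_product mult_ac)
  also have "\<dots> = (\<Sum>m<k. \<Sum>l<k. \<Sum>x\<in>X. C $$ (r, m) * C $$ (s, l) * (v m x * v l x))"
    by (subst sum.swap) (intro sum.cong refl, rule sum.swap)
  also have "\<dots> = (C * gram_mat k X v * C\<^sup>T) $$ (r, s)"
    using r s C
    by (simp add: gram_mat_def scalar_prod_def lessThan_atLeast0 sum_distrib_left sum_distrib_right mult_ac)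
       (subst sum.swap, simp add: mult_ac)
  finally show "gram_mat k X (\<lambda>r x. \<Sum>m<k. C $$ (r, m) * v m x) $$ (r, s)
      = (C * gram_mat k X v * C\<^sup>T) $$ (r, s)"
    using r s by (simp add: gram_mat_def)
qed (use C in \<open>simp_all add: gram_mat_def\<close>)

lemma det_gram_mat_lincomb:
  assumes C: "C \<in> carrier_mat k k"
  shows "det (gram_mat k X (\<lambda>r x. \<Sum>m<k. C $$ (r, m) * v m x)) = det C ^ 2 * det (gram_mat k X v)"
proof -
  have G: "gram_mat k X v \<in> carrier_mat k k" by (simp add: gram_mat_def)
  show ?thesis
    using C G by (simp add: gram_mat_lincomb det_mult[of _ k] mult_carrier_mat det_transpose power2_eq_square)
qed

lemma sum_ordered_pairs_diff_mult_diff: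
  fixes f g :: "'i::linorder \<Rightarrow> 'a::comm_ring_1"
  assumes S: "finite S"
  shows "(\<Sum>(i, j)\<in>{(i, j). i \<in> S \<and> j \<in> S \<and> i < j}. (f i - f j) * (g i - g j))
    = of_nat (card S) * (\<Sum>i\<in>S. f i * g i) - (\<Sum>i\<in>S. f i) * (\<Sum>j\<in>S. g j)"
proof -
  define h where "h = (\<lambda>(i, j). f i * g i - f i * g j)"
  define P where "P = {(i, j). i \<in> S \<and> j \<in> S \<and> i < j}"
  have fin: "finite (S \<times> S)" using S by simp
  have P_sub: "P \<subseteq> S \<times> S" and swap_P_sub: "prod.swap ` P \<subseteq> S \<times> S"
    by (auto simp: P_def)
  have finP: "finite P" using finite_subset[OF P_sub fin] .
  have "(\<Sum>(i, j)\<in>P. (f i - f j) * (g i - g j)) = (\<Sum>x\<in>P. h x) + (\<Sum>x\<in>P. h (prod.swap x))"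
    by (simp add: P_def h_def sum.distrib [symmetric] split_def algebra_simps)
  also have "(\<Sum>x\<in>P. h (prod.swap x)) = (\<Sum>x\<in>prod.swap ` P. h x)"
    by (simp add: sum.reindex)
  also have "(\<Sum>x\<in>P. h x) + \<dots> = (\<Sum>x\<in>P \<union> prod.swap ` P. h x)"
    by (rule sum.union_disjoint [symmetric, OF finP finite_imageI[OF finP]]) (auto simp: P_def)
  also have "\<dots> = (\<Sum>x\<in>S \<times> S. h x)"
    using P_sub swap_P_sub fin
    by (intro sum.mono_neutral_left) (auto simp: P_def h_def not_less_iff_gr_or_eq)
  also have "\<dots> = of_nat (card S) * (\<Sum>i\<in>S. f i * g i) - (\<Sum>i\<in>S. f i) * (\<Sum>j\<in>S. g j)"
    by (simp add: h_def sum.cartesian_product [symmetric] sum_subtractf sum_distrib_left sum_distrib_right)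
       (rule sum.swap)
  finally show ?thesis by (simp add: P_def)
qed

lemma elem_sym_zero:
  assumes "finite S"
  shows "elem_sym z S 0 = 1"
proof -
  have "{T. T \<subseteq> S \<and> card T = 0} = {{}}"
    using assms by (auto dest: finite_subset)
  then show ?thesis by (simp add: elem_sym_def)
qed

lemma elem_sym_fps:
  fixes z :: "nat \<Rightarrow> 'a::comm_ring_1"
  assumes "finite S"
  shows "Abs_fps (elem_sym z S) = (\<Prod>l\<in>S. 1 + fps_const (z l) * fps_X)"
proof (rule fps_ext)
  fix m
  have monomial: "(\<Prod>l\<in>T. fps_const (z l) * fps_X) = fps_const (\<Prod>l\<in>T. z l) * fps_X ^ card T" for T
    by (induction T rule: infinite_finite_induct) (simp_all add: mult_ac flip: fps_const_mult)
  have "(\<Prod>l\<in>S. 1 + fps_const (z l) * fps_X)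
      = (\<Sum>T\<in>Pow S. fps_const (\<Prod>l\<in>T. z l) * fps_X ^ card T)"
    using prod_add[OF assms, of "\<lambda>l. fps_const (z l) * fps_X" "\<lambda>_. 1"]
    by (simp add: add.commute monomial)
  then have "fps_nth (\<Prod>l\<in>S. 1 + fps_const (z l) * fps_X) m
      = (\<Sum>T\<in>Pow S. if card T = m then \<Prod>l\<in>T. z l else 0)"
    by (auto simp: fps_sum_nth intro!: sum.cong)
  also have "\<dots> = (\<Sum>T\<in>{T \<in> Pow S. card T = m}. \<Prod>l\<in>T. z l)"
    using assms by (simp add: sum.inter_filter [symmetric])
  also have "\<dots> = elem_sym z S m"
    by (simp add: elem_sym_def)
  finally show "fps_nth (Abs_fps (elem_sym z S)) m = fps_nth (\<Prod>l\<in>S. 1 + fps_const (z l) * fps_X) m"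
    by simp
qed

lemma fps_linear_times_geometric:
  "(1 + fps_const (c::'a::comm_ring_1) * fps_X) * Abs_fps (\<lambda>m. (- 1) ^ m * c ^ Suc m) = fps_const c"
proof (rule fps_ext)
  fix m
  show "fps_nth ((1 + fps_const c * fps_X) * Abs_fps (\<lambda>m. (- 1) ^ m * c ^ Suc m)) m
      = fps_nth (fps_const c) m"
    by (cases m) (simp_all add: distrib_right mult.assoc)
qed

lemma diff_mult_elem_sym_remove_two:
  fixes z :: "nat \<Rightarrow> 'a::comm_ring_1"
  assumes "finite S" and "x \<notin> S" and "y \<notin> S" and "x \<noteq> y"
  shows "(z x - z y) * elem_sym z S r
    = (\<Sum>m\<le>r. (- 1) ^ m * (z x ^ Suc m - z y ^ Suc m) * elem_sym z (insert x (insert y S)) (r - m))"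
proof -
  \<comment> \<open>\<open>(x - y) / ((1 + x t) (1 + y t)) = x / (1 + x t) - y / (1 + y t)\<close>\<close>
  define lin where "lin c = 1 + fps_const c * fps_X" for c :: 'a
  define geo where "geo c = Abs_fps (\<lambda>m. (- 1) ^ m * c ^ Suc m)" for c :: 'a
  have lin_geo: "lin c * geo c = fps_const c" for c
    unfolding lin_def geo_def by (rule fps_linear_times_geometric)
  let ?E = "Abs_fps (elem_sym z S)" and ?F = "Abs_fps (elem_sym z (insert x (insert y S)))"
  have F: "?F = lin (z x) * lin (z y) * ?E"
    using assms by (simp add: elem_sym_fps lin_def mult.assoc)
  have "(geo (z x) - geo (z y)) * ?F = (lin (z x) * geo (z x) * lin (z y) - lin (z y) * geo (z y) * lin (z x)) * ?E"
    unfolding F by (simp add: algebra_simps)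
  also have "\<dots> = (fps_const (z x) * lin (z y) - fps_const (z y) * lin (z x)) * ?E"
    by (simp only: lin_geo)
  also have "\<dots> = fps_const (z x - z y) * ?E"
    by (simp add: lin_def algebra_simps flip: fps_const_mult)
  finally have "fps_nth (fps_const (z x - z y) * ?E) r = fps_nth ((geo (z x) - geo (z y)) * ?F) r"
    by simp
  also have "\<dots> = (\<Sum>m\<le>r. (- 1) ^ m * (z x ^ Suc m - z y ^ Suc m)
      * elem_sym z (insert x (insert y S)) (r - m))"
    by (simp only: fps_mult_nth) (simp add: geo_def atLeast0AtMost algebra_simps)
  finally show ?thesis by simp
qed

lemma diff_mult_e_ij:
  fixes z :: "nat \<Rightarrow> 'a::comm_ring_1"
  assumes "1 \<le> i" and "i < j" and "j \<le> n"
  shows "(z i - z j) * e_ij z n i j r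
    = (\<Sum>m\<le>r. (- 1) ^ m * (z i ^ Suc m - z j ^ Suc m) * elem_sym z {1..n} (r - m))"
proof -
  have "insert i (insert j ({1..n} - {i, j})) = {1..n}"
    using assms by auto
  then show ?thesis
    using diff_mult_elem_sym_remove_two[of "{1..n} - {i, j}" i j z r] assms
    by (simp add: e_ij_def)
qed

definition hankel_mat :: "nat \<Rightarrow> (nat \<Rightarrow> 'a) \<Rightarrow> 'a mat" where
  "hankel_mat k p = mat k k (\<lambda>(i, j). p (i + j))"

lemma lead_minor_hermite_mat_eq_det_hankel_mat: "lead_minor k (hermite_mat z n) = det (hankel_mat k (power_sum z n))"
  unfolding lead_minor_def hermite_mat_def hankel_mat_def by (auto intro!: arg_cong[of _ _ det] eq_matI)

lemma pivot_condensation_power_sum_hankel: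
  fixes z :: "nat \<Rightarrow> 'a::comm_ring_1"
  shows "pivot_condensation (hankel_mat (Suc k) (power_sum z n))
    = gram_mat k {(i, j). 1 \<le> i \<and> i < j \<and> j \<le> n} (\<lambda>m (i, j). z i ^ Suc m - z j ^ Suc m)"
    (is "_ = ?G")
proof (rule eq_matI)
  fix a b
  assume "a < dim_row ?G" and "b < dim_col ?G"
  then have a: "a < k" and b: "b < k" by (auto simp: gram_mat_def)
  have pairs: "{(i, j). 1 \<le> i \<and> i < j \<and> j \<le> n} = {(i, j). i \<in> {1..n} \<and> j \<in> {1..n} \<and> i < j}"
    by auto
  have "pivot_condensation (hankel_mat (Suc k) (power_sum z n)) $$ (a, b)
      = of_nat n * power_sum z n (Suc a + Suc b) - power_sum z n (Suc a) * power_sum z n (Suc b)"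
    using a b by (simp add: pivot_condensation_def hankel_mat_def power_sum_def)
  also have "\<dots> = (\<Sum>(i, j)\<in>{(i, j). i \<in> {1..n} \<and> j \<in> {1..n} \<and> i < j}.
      (z i ^ Suc a - z j ^ Suc a) * (z i ^ Suc b - z j ^ Suc b))"
    using sum_ordered_pairs_diff_mult_diff[of "{1..n}" "\<lambda>i. z i ^ Suc a" "\<lambda>i. z i ^ Suc b"]
    by (simp add: power_sum_def power_add mult_ac)
  also have "\<dots> = ?G $$ (a, b)"
    using a b unfolding pairs by (simp add: gram_mat_def split_def)
  finally show "pivot_condensation (hankel_mat (Suc k) (power_sum z n)) $$ (a, b) = ?G $$ (a, b)" .
qed (simp_all add: pivot_condensation_def hankel_mat_def gram_mat_def)

definition elem_sym_coeff_mat :: "(nat \<Rightarrow> 'a::comm_ring_1) \<Rightarrow> nat \<Rightarrow> nat \<Rightarrow> 'a mat" where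
  "elem_sym_coeff_mat z n k = mat k k (\<lambda>(r, m).
     if m \<le> r then of_nat (fact r) * (- 1) ^ m * elem_sym z {1..n} (r - m) else 0)"

lemma det_elem_sym_coeff_mat:
  "det (elem_sym_coeff_mat z n k) = (\<Prod>r<k. of_nat (fact r) * (- 1) ^ r)"
  by (subst det_lower_triangular_prod[of _ k]) (auto simp: elem_sym_coeff_mat_def elem_sym_zero)

lemma lead_minor_E_mat_eq_det_gram_mat:
  fixes z :: "nat \<Rightarrow> 'a::comm_ring_1"
  shows "lead_minor k (E_mat z n) = det (gram_mat k {(i, j). 1 \<le> i \<and> i < j \<and> j \<le> n}
    (\<lambda>r x. \<Sum>m<k. elem_sym_coeff_mat z n k $$ (r, m)
      * (case x of (i, j) \<Rightarrow> z i ^ Suc m - z j ^ Suc m)))"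
    (is "_ = det ?G")
proof -
  let ?P = "{(i, j). 1 \<le> i \<and> i < j \<and> j \<le> n}"
  have "lead_minor k (E_mat z n)
      = det (gram_mat k ?P (\<lambda>r (i, j). of_nat (fact r) * ((z i - z j) * e_ij z n i j r)))"
    unfolding lead_minor_def gram_mat_def
    by (auto simp: E_mat_def sum_distrib_left split_def power2_eq_square mult_ac
        intro!: arg_cong[of _ _ det] eq_matI sum.cong)
  also have "gram_mat k ?P (\<lambda>r (i, j). of_nat (fact r) * ((z i - z j) * e_ij z n i j r)) = ?G"
  proof (rule gram_mat_cong)
    fix r x
    assume "r < k" and "x \<in> ?P"
    then obtain i j where x: "x = (i, j)" and ij: "1 \<le> i" "i < j" "j \<le> n"
      by auto
    have "(\<Sum>m<k. elem_sym_coeff_mat z n k $$ (r, m) * (z i ^ Suc m - z j ^ Suc m))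
        = (\<Sum>m\<le>r. of_nat (fact r) * (- 1) ^ m * elem_sym z {1..n} (r - m)
            * (z i ^ Suc m - z j ^ Suc m))"
      using \<open>r < k\<close> by (intro sum.mono_neutral_cong_right) (auto simp: elem_sym_coeff_mat_def)
    then show "(case x of (i, j) \<Rightarrow> of_nat (fact r) * ((z i - z j) * e_ij z n i j r))
        = (\<Sum>m<k. elem_sym_coeff_mat z n k $$ (r, m)
            * (case x of (i, j) \<Rightarrow> z i ^ Suc m - z j ^ Suc m))"
      using diff_mult_e_ij[OF ij, of z r] by (simp add: x sum_distrib_left mult_ac)
  qed
  finally show ?thesis .
qed

theorem mainTheorem1:
  fixes z :: "nat \<Rightarrow> 'a::comm_ring_1" and n k :: nat
  assumes "n \<ge> 2" and "1 \<le> k" and "k \<le> n - 1"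
  shows "of_nat ((\<Prod>i<k. fact i)^2) * of_nat n ^ (k - 1) * lead_minor (k + 1) (hermite_mat z n)
           = lead_minor k (E_mat z n)"
proof -
  let ?C = "elem_sym_coeff_mat z n k"
  let ?P = "{(i, j). 1 \<le> i \<and> i < j \<and> j \<le> n}"
  let ?d = "\<lambda>m (i, j). z i ^ Suc m - z j ^ Suc m"
  let ?H = "hankel_mat (Suc k) (power_sum z n)"
  have "lead_minor k (E_mat z n) = det (gram_mat k ?P (\<lambda>r x. \<Sum>m<k. ?C $$ (r, m) * ?d m x))"
    by (rule lead_minor_E_mat_eq_det_gram_mat)
  also have "\<dots> = det ?C ^ 2 * det (gram_mat k ?P ?d)"
    by (rule det_gram_mat_lincomb) (simp add: elem_sym_coeff_mat_def)
  also have "det ?C ^ 2 = of_nat ((\<Prod>i<k. fact i)^2)"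
    by (simp add: det_elem_sym_coeff_mat prod.distrib power_mult_distrib prod_power_distrib flip: power_mult)
  also have "gram_mat k ?P ?d = pivot_condensation ?H"
    by (rule pivot_condensation_power_sum_hankel [symmetric])
  also have "det (pivot_condensation ?H) = of_nat n ^ (k - 1) * lead_minor (k + 1) (hermite_mat z n)"
    using det_pivot_condensation[of ?H k] \<open>1 \<le> k\<close>
    by (simp add: lead_minor_hermite_mat_eq_det_hankel_mat hankel_mat_def power_sum_def)
  finally show ?thesis
    by (simp add: mult_ac)
qed

end
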